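(* Let $G=K_{m_1,\dots,m_k}$ be the complete multipartite graph with $k\ge 1$ parts of sizes $m_1,\dots,m_k\ge 1$, and let $\alpha=\max\{m_1,\dots,m_k\}$. Then $G$ is pseudo-Gorenstein$^{*}$ if and only if $k=2$ and $\alpha$ is odd.
   Context: The complete multipartite graph $K_{m_1,\dots,m_k}$ has vertex set $V_1\sqcup\dots\sqcup V_k$ with $|V_i|=m_i$, and $\{a,b\}$ is an edge iff $a\in V_i$, $b\in V_j$ with $i\ne j$. For a finite simple graph $G$ on vertex set $[N]$, let $S=K[x_1,\dots,x_N]$ ($K$ a field) and $I(G)$ the edge ideal generated by $x_ix_j$, $\{i,j\}\in E(G)$. Let $\alpha(G)$ be the independence number (equal to $\dim S/I(G)$). Write the Hilbert series of $S/I(G)$ uniquely as $(h_0+\dots+h_st^s)/(1-t)^{\alpha(G)}$ with $h_s\ne 0$, and $\mathfrak a(G)=s-\alpha(G)$. $G$ is pseudo-Gorenstein$^{*}$ if $h_s=1$ and $\mathfrak a(G)=0$. *)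

theory Defs
  imports "HOL-Computational_Algebra.Formal_Power_Series"
begin

text \<open>A finite simple graph is given by a finite vertex set V and a symmetric,
irreflexive edge relation E.  The polynomial ring S = K[x_v : v in V] has as
K-basis the monomials, encoded by exponent vectors supported on V.  The edge
ideal I(G) is a monomial ideal generated by x_u x_v for edges {u,v}; a monomial
lies in I(G) iff it is divisible by some generator.  The monomials outside I(G)
form a K-basis of S/I(G), so the Hilbert function of S/I(G) in degree d is the
number of such monomials of degree d (independent of the field K).\<close>

definition monomials_deg :: "'a set \<Rightarrow> nat \<Rightarrow> ('a \<Rightarrow> nat) set" where
  "monomials_deg V d = {a. (\<forall>x. x \<notin> V \<longrightarrow> a x = 0) \<and> (\<Sum>x\<in>V. a x) = d}"

definition in_edge_ideal :: "('a \<Rightarrow> 'a \<Rightarrow> bool) \<Rightarrow> ('a \<Rightarrow> nat) \<Rightarrow> bool" where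
  "in_edge_ideal E a \<longleftrightarrow> (\<exists>u v. E u v \<and> u \<noteq> v \<and> a u \<ge> 1 \<and> a v \<ge> 1)"

definition hilbert_fun :: "'a set \<Rightarrow> ('a \<Rightarrow> 'a \<Rightarrow> bool) \<Rightarrow> nat \<Rightarrow> nat" where
  "hilbert_fun V E d = card {a \<in> monomials_deg V d. \<not> in_edge_ideal E a}"

definition hilbert_series :: "'a set \<Rightarrow> ('a \<Rightarrow> 'a \<Rightarrow> bool) \<Rightarrow> int fps" where
  "hilbert_series V E = Abs_fps (\<lambda>d. int (hilbert_fun V E d))"

definition independent_set :: "'a set \<Rightarrow> ('a \<Rightarrow> 'a \<Rightarrow> bool) \<Rightarrow> 'a set \<Rightarrow> bool" where
  "independent_set V E S \<longleftrightarrow> S \<subseteq> V \<and> (\<forall>u\<in>S. \<forall>v\<in>S. \<not> E u v)"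

definition independence_number :: "'a set \<Rightarrow> ('a \<Rightarrow> 'a \<Rightarrow> bool) \<Rightarrow> nat" where
  "independence_number V E = Max (card ` {S. independent_set V E S})"

definition h_fps :: "'a set \<Rightarrow> ('a \<Rightarrow> 'a \<Rightarrow> bool) \<Rightarrow> int fps" where
  "h_fps V E = hilbert_series V E * (1 - fps_X) ^ independence_number V E"

definition h_degree :: "'a set \<Rightarrow> ('a \<Rightarrow> 'a \<Rightarrow> bool) \<Rightarrow> nat" where
  "h_degree V E = Max {n. fps_nth (h_fps V E) n \<noteq> 0}"

definition a_invariant :: "'a set \<Rightarrow> ('a \<Rightarrow> 'a \<Rightarrow> bool) \<Rightarrow> int" where
  "a_invariant V E = int (h_degree V E) - int (independence_number V E)"

definition pseudo_Gorenstein_star :: "'a set \<Rightarrow> ('a \<Rightarrow> 'a \<Rightarrow> bool) \<Rightarrow> bool" where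
  "pseudo_Gorenstein_star V E \<longleftrightarrow>
     finite {n. fps_nth (h_fps V E) n \<noteq> 0} \<and>
     {n. fps_nth (h_fps V E) n \<noteq> 0} \<noteq> {} \<and>
     fps_nth (h_fps V E) (h_degree V E) = 1 \<and> a_invariant V E = 0"

text \<open>Complete multipartite graph K_{m_1,...,m_k} with ms = [m_1,...,m_k]:
  vertices (i,j) with i < k, j < m_i; the part V_i is {(i,j). j < m_i}.\<close>
definition cmp_vertices :: "nat list \<Rightarrow> (nat \<times> nat) set" where
  "cmp_vertices ms = {(i, j). i < length ms \<and> j < ms ! i}"

definition cmp_edge :: "(nat \<times> nat) \<Rightarrow> (nat \<times> nat) \<Rightarrow> bool" where
  "cmp_edge p q \<longleftrightarrow> fst p \<noteq> fst q"

end

theory Submission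
  imports Defs "HOL-Library.Multiset"
begin

(* Degree-d monomials on a finite set of n variables correspond to multisets of size d, so there
   are (n + d - 1 choose d) of them.  A monomial of positive degree avoids the edge ideal of
   K_{m_1,...,m_k} iff it is supported on a single part, hence
   HS(t) = sum_i 1/(1-t)^{m_i} - (k - 1); the largest independent sets are the largest parts, so
   alpha = max m_i and h(t) = sum_i (1-t)^{alpha - m_i} - (k - 1) (1-t)^alpha.
   For k = 1 this is h = 1, of degree 0 < alpha.  For k >= 2 all alpha - m_i < alpha, so h has
   degree exactly alpha (thus a(G) = 0) with top coefficient (k - 1) (-1)^(alpha + 1), which is 1
   iff k = 2 and alpha is odd. *)

lemma monomials_deg_support:
  "a \<in> monomials_deg A d \<Longrightarrow> a x \<noteq> 0 \<Longrightarrow> x \<in> A"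
  by (auto simp: monomials_deg_def)

lemma monomials_deg_of_subset:
  assumes "A \<subseteq> B" and "finite B"
  shows "monomials_deg A d = {a \<in> monomials_deg B d. \<forall>x. x \<notin> A \<longrightarrow> a x = 0}"
proof -
  have "(\<Sum>x\<in>B. a x) = (\<Sum>x\<in>A. a x)"
    if "\<forall>x. x \<notin> A \<longrightarrow> a x = 0" for a :: "'a \<Rightarrow> nat"
    using that by (intro sum.mono_neutral_right[OF assms(2,1)]) blast
  then show ?thesis
    using assms(1) by (auto simp: monomials_deg_def)
qed

lemma monomials_deg_disjoint:
  assumes "A \<inter> B = {}" and "d > 0"
  shows "monomials_deg A d \<inter> monomials_deg B d = {}"
proof (intro equalityI subsetI)
  fix a assume a: "a \<in> monomials_deg A d \<inter> monomials_deg B d"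
  then have "(\<Sum>x\<in>A. a x) \<noteq> 0"
    using assms(2) by (simp add: monomials_deg_def)
  then obtain x where "x \<in> A" "a x \<noteq> 0"
    by (meson sum.neutral)
  with a assms(1) show "a \<in> {}"
    by (auto simp: monomials_deg_def)
qed simp

lemma monomials_deg_0:
  assumes "finite A"
  shows "monomials_deg A 0 = {\<lambda>_. 0}"
  using assms by (auto simp: monomials_deg_def fun_eq_iff)

lemma bij_betw_count_multisets_of_size:
  assumes "finite A"
  shows "bij_betw count (multisets_of_size A d) (monomials_deg A d)"
proof (rule bij_betw_imageI)
  show "inj_on count (multisets_of_size A d)"
    by (meson count_inject inj_onI)
  have sum_count: "(\<Sum>x\<in>A. count M x) = size M"
    if "set_mset M \<subseteq> A" for M :: "'a multiset"
    by (subst sum.mono_neutral_right[OF assms that])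
       (auto simp: size_multiset_overloaded_eq not_in_iff)
  show "count ` multisets_of_size A d = monomials_deg A d"
  proof (intro equalityI subsetI)
    fix a assume "a \<in> count ` multisets_of_size A d"
    then show "a \<in> monomials_deg A d"
      by (auto simp: multisets_of_size_def monomials_deg_def sum_count
          simp flip: count_eq_zero_iff)
  next
    fix a assume a: "a \<in> monomials_deg A d"
    then have "{x. a x > 0} \<subseteq> A"
      by (auto simp: monomials_deg_def)
    then have count_M: "count (Abs_multiset a) = a"
      using assms finite_subset by (blast intro: count_Abs_multiset)
    have support: "set_mset (Abs_multiset a) \<subseteq> A"
      using a count_M by (auto simp: monomials_deg_def set_mset_def)
    moreover have "size (Abs_multiset a) = d"
      using a sum_count[OF support] by (simp add: monomials_deg_def count_M)
    ultimately have "Abs_multiset a \<in> multisets_of_size A d"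
      by (simp add: multisets_of_size_def)
    then show "a \<in> count ` multisets_of_size A d"
      using count_M by (metis image_eqI)
  qed
qed

lemma card_monomials_deg:
  assumes "finite A"
  shows "card (monomials_deg A d) = (card A + d - 1) choose d"
  using bij_betw_same_card[OF bij_betw_count_multisets_of_size[OF assms]]
  by (simp add: card_multisets_of_size[OF assms])

lemma finite_monomials_deg:
  assumes "finite A"
  shows "finite (monomials_deg A d)"
  using bij_betw_finite[OF bij_betw_count_multisets_of_size[OF assms]] assms by blast

lemma hilbert_fun_0:
  assumes "finite V"
  shows "hilbert_fun V E 0 = 1"
proof -
  have "{a \<in> monomials_deg V 0. \<not> in_edge_ideal E a} = {\<lambda>_. 0}"
    by (auto simp: monomials_deg_0[OF assms] in_edge_ideal_def)
  then show ?thesis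
    by (simp add: hilbert_fun_def)
qed

definition monomial_count_fps :: "nat \<Rightarrow> 'a::comm_ring_1 fps" where
  "monomial_count_fps m = Abs_fps (\<lambda>d. of_nat ((m + d - 1) choose d))"

lemma monomial_count_fps_0: "monomial_count_fps 0 = 1"
  by (rule fps_ext) (simp add: monomial_count_fps_def binomial_eq_0)

lemma monomial_count_fps_Suc_times_one_minus_X:
  "monomial_count_fps (Suc m) * (1 - fps_X) = monomial_count_fps m"
proof (rule fps_ext)
  fix n
  show "fps_nth (monomial_count_fps (Suc m) * (1 - fps_X)) n = fps_nth (monomial_count_fps m) n"
  proof (cases n)
    case (Suc k)
    have "(m + Suc k choose Suc k) = (m + k choose k) + (m + k choose Suc k)"
      by (metis add_Suc_right binomial_Suc_Suc)
    then show ?thesis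
      by (simp add: Suc monomial_count_fps_def right_diff_distrib of_nat_add)
  qed (simp add: monomial_count_fps_def right_diff_distrib)
qed

lemma monomial_count_fps_times_one_minus_X_power:
  "monomial_count_fps m * (1 - fps_X) ^ m = (1 :: 'a::comm_ring_1 fps)"
proof (induction m)
  case 0
  then show ?case by (simp add: monomial_count_fps_0)
next
  case (Suc m)
  then show ?case
    by (metis monomial_count_fps_Suc_times_one_minus_X mult.assoc power_Suc)
qed

lemma monomial_count_fps_times_one_minus_X_power_ge:
  assumes "m \<le> n"
  shows "monomial_count_fps m * (1 - fps_X) ^ n =
           ((1 - fps_X) ^ (n - m) :: 'a::comm_ring_1 fps)"
proof -
  have "(1 - fps_X :: 'a fps) ^ n = (1 - fps_X) ^ m * (1 - fps_X) ^ (n - m)"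
    using assms by (simp flip: power_add)
  then show ?thesis
    by (simp add: mult.assoc [symmetric] monomial_count_fps_times_one_minus_X_power)
qed

lemma fps_nth_one_minus_X_power:
  "fps_nth ((1 - fps_X) ^ n :: 'a::comm_ring_1 fps) j = (-1) ^ j * of_nat (n choose j)"
proof (induction n arbitrary: j)
  case (Suc n)
  then show ?case
    by (cases j) (simp_all add: left_diff_distrib fps_X_mult_nth algebra_simps)
qed (simp add: binomial_eq_0)

lemma pseudo_Gorenstein_star_iff_top_coeff:
  assumes vanish: "\<And>n. n > N \<Longrightarrow> fps_nth (h_fps V E) n = 0"
    and top: "fps_nth (h_fps V E) N \<noteq> 0"
  shows "pseudo_Gorenstein_star V E \<longleftrightarrow>
           fps_nth (h_fps V E) N = 1 \<and> N = independence_number V E"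
proof -
  let ?Z = "{n. fps_nth (h_fps V E) n \<noteq> 0}"
  have "?Z \<subseteq> {..N}"
    using vanish by (auto simp: not_le[symmetric])
  then have "finite ?Z" and "h_degree V E = N"
    using top finite_subset unfolding h_degree_def by (blast, auto intro!: Max_eqI)
  then show ?thesis
    using top by (auto simp: pseudo_Gorenstein_star_def a_invariant_def)
qed

definition cmp_part :: "nat list \<Rightarrow> nat \<Rightarrow> (nat \<times> nat) set" where
  "cmp_part ms i = Pair i ` {..<ms ! i}"

lemma finite_cmp_part: "finite (cmp_part ms i)"
  by (simp add: cmp_part_def)

lemma card_cmp_part: "card (cmp_part ms i) = ms ! i"
  by (simp add: cmp_part_def card_image inj_on_def)

lemma cmp_part_disjoint: "i \<noteq> j \<Longrightarrow> cmp_part ms i \<inter> cmp_part ms j = {}"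
  by (auto simp: cmp_part_def)

lemma cmp_vertices_eq_UN_cmp_part: "cmp_vertices ms = (\<Union>i<length ms. cmp_part ms i)"
  by (auto simp: cmp_vertices_def cmp_part_def)

lemma finite_cmp_vertices: "finite (cmp_vertices ms)"
  by (simp add: cmp_vertices_eq_UN_cmp_part finite_cmp_part)

lemma cmp_part_subset_cmp_vertices: "i < length ms \<Longrightarrow> cmp_part ms i \<subseteq> cmp_vertices ms"
  by (auto simp: cmp_vertices_eq_UN_cmp_part)

lemma independent_set_cmp_part:
  "i < length ms \<Longrightarrow> independent_set (cmp_vertices ms) cmp_edge (cmp_part ms i)"
  by (simp add: independent_set_def cmp_part_subset_cmp_vertices)
     (auto simp: cmp_part_def cmp_edge_def)

lemma independent_set_cmp_subset_cmp_part:
  assumes "independent_set (cmp_vertices ms) cmp_edge S" and "x \<in> S"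
  shows "S \<subseteq> cmp_part ms (fst x)"
proof
  fix y assume "y \<in> S"
  with assms have "fst y = fst x" and "y \<in> cmp_vertices ms"
    unfolding independent_set_def cmp_edge_def by blast+
  then show "y \<in> cmp_part ms (fst x)"
    by (cases y) (simp add: cmp_vertices_def cmp_part_def)
qed

lemma independence_number_cmp:
  assumes "ms \<noteq> []"
  shows "independence_number (cmp_vertices ms) cmp_edge = Max (set ms)"
  unfolding independence_number_def
proof (rule Max_eqI)
  let ?I = "{S. independent_set (cmp_vertices ms) cmp_edge S}"
  show "c \<le> Max (set ms)" if c_card: "c \<in> card ` ?I" for c
  proof -
    obtain S where S: "independent_set (cmp_vertices ms) cmp_edge S" and c: "c = card S"
      using c_card by blast
    show ?thesis
    proof (cases "S = {}")
      case False
      then obtain x where x: "x \<in> S" by blast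
      then have "fst x < length ms"
        using S by (cases x) (auto simp: independent_set_def cmp_vertices_def)
      then have "ms ! fst x \<le> Max (set ms)"
        by simp
      moreover have "card S \<le> ms ! fst x"
        using card_mono[OF finite_cmp_part independent_set_cmp_subset_cmp_part[OF S x]]
        by (simp add: card_cmp_part)
      ultimately show ?thesis
        by (simp add: c)
    qed (simp add: c)
  qed
  then show "finite (card ` ?I)"
    by (meson finite_atMost finite_subset atMost_iff subsetI)
  obtain i where "i < length ms" and "ms ! i = Max (set ms)"
    using Max_in[of "set ms"] assms by (auto simp: in_set_conv_nth)
  then show "Max (set ms) \<in> card ` ?I"
    using independent_set_cmp_part card_cmp_part by (metis image_eqI mem_Collect_eq)
qed

lemma cmp_standard_monomials:
  assumes "d > 0"
  shows "{a \<in> monomials_deg (cmp_vertices ms) d. \<not> in_edge_ideal cmp_edge a} =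
           (\<Union>i<length ms. monomials_deg (cmp_part ms i) d)"
proof (intro equalityI subsetI)
  fix a assume "a \<in> {a \<in> monomials_deg (cmp_vertices ms) d. \<not> in_edge_ideal cmp_edge a}"
  then have mon: "a \<in> monomials_deg (cmp_vertices ms) d" and std: "\<not> in_edge_ideal cmp_edge a"
    by auto
  have "(\<Sum>x\<in>cmp_vertices ms. a x) \<noteq> 0"
    using mon assms by (simp add: monomials_deg_def)
  then obtain x where x: "x \<in> cmp_vertices ms" "a x \<noteq> 0"
    by (meson sum.neutral)
  have "a y = 0" if y: "y \<notin> cmp_part ms (fst x)" for y
  proof (cases "y \<in> cmp_vertices ms")
    case True
    have "fst x \<noteq> fst y"
    proof
      assume "fst x = fst y"
      with True have "y \<in> cmp_part ms (fst x)"
        by (cases y) (simp add: cmp_vertices_def cmp_part_def)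
      with y show False by contradiction
    qed
    then have "x \<noteq> y" by blast
    with \<open>fst x \<noteq> fst y\<close> std have "\<not> (a x \<ge> 1 \<and> a y \<ge> 1)"
      unfolding in_edge_ideal_def cmp_edge_def by blast
    with x(2) show ?thesis by simp
  qed (use monomials_deg_support[OF mon, of y] in blast)
  moreover have i: "fst x < length ms"
    using x(1) by (cases x) (simp add: cmp_vertices_def)
  ultimately have "a \<in> monomials_deg (cmp_part ms (fst x)) d"
    using mon
    by (simp add: monomials_deg_of_subset[OF cmp_part_subset_cmp_vertices[OF i] finite_cmp_vertices])
  with i show "a \<in> (\<Union>i<length ms. monomials_deg (cmp_part ms i) d)"
    by blast
next
  fix a assume "a \<in> (\<Union>i<length ms. monomials_deg (cmp_part ms i) d)"
  then obtain i where i: "i < length ms" and mon: "a \<in> monomials_deg (cmp_part ms i) d"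
    by blast
  have "a \<in> monomials_deg (cmp_vertices ms) d"
    using mon
    by (simp add: monomials_deg_of_subset[OF cmp_part_subset_cmp_vertices[OF i] finite_cmp_vertices])
  moreover have "\<not> in_edge_ideal cmp_edge a"
  proof
    assume "in_edge_ideal cmp_edge a"
    then obtain u v where uv: "cmp_edge u v" "a u \<ge> 1" "a v \<ge> 1"
      unfolding in_edge_ideal_def by blast
    have "u \<in> cmp_part ms i" "v \<in> cmp_part ms i"
      using uv(2,3) by (auto intro: monomials_deg_support[OF mon])
    then have "fst u = fst v"
      by (auto simp: cmp_part_def)
    with uv(1) show False
      by (simp add: cmp_edge_def)
  qed
  ultimately show "a \<in> {a \<in> monomials_deg (cmp_vertices ms) d. \<not> in_edge_ideal cmp_edge a}"
    by blast
qed

lemma hilbert_fun_cmp: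
  assumes "d > 0"
  shows "hilbert_fun (cmp_vertices ms) cmp_edge d = (\<Sum>i<length ms. (ms ! i + d - 1) choose d)"
proof -
  have "hilbert_fun (cmp_vertices ms) cmp_edge d =
          (\<Sum>i<length ms. card (monomials_deg (cmp_part ms i) d))"
    unfolding hilbert_fun_def cmp_standard_monomials[OF assms]
    by (intro card_UN_disjoint)
       (auto simp: finite_monomials_deg finite_cmp_part monomials_deg_disjoint[OF cmp_part_disjoint assms])
  then show ?thesis
    by (simp add: card_monomials_deg finite_cmp_part card_cmp_part)
qed

lemma hilbert_series_cmp:
  "hilbert_series (cmp_vertices ms) cmp_edge =
     (\<Sum>i<length ms. monomial_count_fps (ms ! i)) - fps_const (int (length ms) - 1)"
proof (rule fps_ext)
  fix d
  show "fps_nth (hilbert_series (cmp_vertices ms) cmp_edge) d =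
          fps_nth ((\<Sum>i<length ms. monomial_count_fps (ms ! i)) - fps_const (int (length ms) - 1)) d"
  proof (cases "d = 0")
    case True
    then show ?thesis
      by (simp add: hilbert_series_def hilbert_fun_0 finite_cmp_vertices fps_sum_nth
          monomial_count_fps_def)
  next
    case False
    then show ?thesis
      by (simp add: hilbert_series_def hilbert_fun_cmp fps_sum_nth monomial_count_fps_def)
  qed
qed

lemma h_fps_cmp:
  assumes "ms \<noteq> []"
  shows "h_fps (cmp_vertices ms) cmp_edge =
           (\<Sum>i<length ms. (1 - fps_X) ^ (Max (set ms) - ms ! i))
           - fps_const (int (length ms) - 1) * (1 - fps_X) ^ Max (set ms)"
proof -
  have "monomial_count_fps (ms ! i) * (1 - fps_X) ^ Max (set ms) =
          ((1 - fps_X) ^ (Max (set ms) - ms ! i) :: int fps)" if "i < length ms" for i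
    using that by (intro monomial_count_fps_times_one_minus_X_power_ge) simp
  then show ?thesis
    unfolding h_fps_def hilbert_series_cmp independence_number_cmp[OF assms]
    by (simp add: left_diff_distrib sum_distrib_right)
qed

lemma h_fps_cmp_nth:
  assumes "ms \<noteq> []"
  shows "fps_nth (h_fps (cmp_vertices ms) cmp_edge) n =
           (-1) ^ n * ((\<Sum>i<length ms. int ((Max (set ms) - ms ! i) choose n))
                        - (int (length ms) - 1) * int (Max (set ms) choose n))"
  by (simp add: h_fps_cmp[OF assms] fps_sum_nth fps_nth_one_minus_X_power sum_distrib_left
      algebra_simps)

lemma h_fps_cmp_nth_above_Max:
  assumes "ms \<noteq> []" and "Max (set ms) < n"
  shows "fps_nth (h_fps (cmp_vertices ms) cmp_edge) n = 0"
proof -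
  have "(Max (set ms) - ms ! i) choose n = 0" for i
    using assms(2) by (simp add: binomial_eq_0 less_imp_diff_less)
  with assms show ?thesis
    by (simp add: h_fps_cmp_nth binomial_eq_0)
qed

lemma h_fps_cmp_nth_Max:
  assumes "ms \<noteq> []" and "\<forall>m\<in>set ms. m \<ge> 1"
  shows "fps_nth (h_fps (cmp_vertices ms) cmp_edge) (Max (set ms)) =
           (1 - int (length ms)) * (-1) ^ Max (set ms)"
proof -
  have "Max (set ms) - ms ! i < Max (set ms)" if "i < length ms" for i
  proof -
    have "ms ! i \<in> set ms"
      using that by simp
    then have "1 \<le> ms ! i" and "ms ! i \<le> Max (set ms)"
      using assms(2) by auto
    then show ?thesis
      by (intro diff_less) auto
  qed
  then have "(\<Sum>i<length ms. int ((Max (set ms) - ms ! i) choose Max (set ms))) = 0"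
    by (simp add: binomial_eq_0)
  then show ?thesis
    by (simp add: h_fps_cmp_nth[OF assms(1)] algebra_simps)
qed

theorem corollary3p2:
  fixes ms :: "nat list"
  assumes "length ms \<ge> 1" and "\<forall>m\<in>set ms. m \<ge> 1"
  shows "pseudo_Gorenstein_star (cmp_vertices ms) cmp_edge \<longleftrightarrow>
           length ms = 2 \<and> odd (Max (set ms))"
proof -
  let ?\<alpha> = "Max (set ms)"
  have ne: "ms \<noteq> []"
    using assms(1) by auto
  have "?\<alpha> \<ge> 1"
    using assms ne by (metis Max_ge finite_set last_in_set le_trans)
  show ?thesis
  proof (cases "length ms = 1")
    case True
    then obtain m where "ms = [m]"
      by (auto simp: length_Suc_conv)
    then have "h_fps (cmp_vertices ms) cmp_edge = 1"
      by (simp add: h_fps_cmp)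
    with \<open>?\<alpha> \<ge> 1\<close> show ?thesis
      by (subst pseudo_Gorenstein_star_iff_top_coeff[where N = 0])
         (auto simp: True independence_number_cmp[OF ne])
  next
    case False
    with assms(1) have "length ms \<ge> 2" by simp
    then have "pseudo_Gorenstein_star (cmp_vertices ms) cmp_edge \<longleftrightarrow>
                 (1 - int (length ms)) * (-1) ^ ?\<alpha> = 1"
      using pseudo_Gorenstein_star_iff_top_coeff[OF h_fps_cmp_nth_above_Max[OF ne]]
      by (simp add: h_fps_cmp_nth_Max[OF ne assms(2)] independence_number_cmp[OF ne])
    with \<open>length ms \<ge> 2\<close> show ?thesis
      by (cases "even ?\<alpha>") auto
  qed
qed

end
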